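(* Let $A\subset\mathbb{R}^m$ be a set-germ at $0$ with $0\in\overline{A}$ and $B\subset\mathbb{R}^n$ a set-germ at $0$ with $0\in\overline{B}$. Then $A$ satisfies condition (SSP) at $0\in\mathbb{R}^m$ and $B$ satisfies condition (SSP) at $0\in\mathbb{R}^n$ if and only if $A\times B$ satisfies condition (SSP) at $(0,0)\in\mathbb{R}^m\times\mathbb{R}^n$.
   Context: For a set-germ $A\subset\mathbb{R}^k$ at $0$ with $0\in\overline A$, $D(A)=\{a\in S^{k-1}:\exists\, x_i\in A\setminus\{0\},\ x_i\to0,\ x_i/\|x_i\|\to a\}$. For sequences, $\|u_m\|\ll\|v_m\|,\|w_m\|$ means $\|u_m\|/\|v_m\|\to0$ and $\|u_m\|/\|w_m\|\to0$. $A$ satisfies condition (SSP) at $0$ if for every sequence $a_m\in\mathbb{R}^k$ tending to $0$ with $\lim a_m/\|a_m\|\in D(A)$ there is a sequence $b_m\in A$ with $\|a_m-b_m\|\ll\|a_m\|,\|b_m\|$. *)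

theory Defs
  imports "HOL-Analysis.Analysis"
begin

definition dirset :: "'a::euclidean_space set \<Rightarrow> 'a set" where
  "dirset A = {u \<in> sphere 0 1. \<exists>x::nat \<Rightarrow> 'a. (\<forall>i. x i \<in> A - {0}) \<and> x \<longlonglongrightarrow> 0 \<and>
       (\<lambda>i. (1 / norm (x i)) *\<^sub>R x i) \<longlonglongrightarrow> u}"

definition SSP :: "'a::euclidean_space set \<Rightarrow> bool" where
  "SSP A \<longleftrightarrow> (\<forall>a::nat \<Rightarrow> 'a. (\<forall>i. a i \<noteq> 0) \<and> a \<longlonglongrightarrow> 0 \<and>
       (\<exists>u \<in> dirset A. (\<lambda>i. (1 / norm (a i)) *\<^sub>R a i) \<longlonglongrightarrow> u) \<longrightarrow>
     (\<exists>b::nat \<Rightarrow> 'a. (\<forall>i. b i \<in> A) \<and>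
        (\<lambda>i. norm (a i - b i) / norm (a i)) \<longlonglongrightarrow> 0 \<and>
        (\<lambda>i. norm (a i - b i) / norm (b i)) \<longlonglongrightarrow> 0))"

end

theory Submission
  imports Defs
begin

text \<open>If \<open>a \<rightarrow> 0\<close> in \<open>A \<times> B\<close> with limit direction
  \<open>w = (w\<^sub>1, w\<^sub>2)\<close>, then a component with \<open>w\<^sub>k = 0\<close> is approximated by points of
  the factor that are quadratically small (they exist as 0 lies in its closure), while a component
  with \<open>w\<^sub>k \<noteq> 0\<close> approaches the factor in the direction \<open>w\<^sub>k / |w\<^sub>k|\<close>, which is a
  limit direction of the factor (project the points of \<open>A \<times> B\<close> realising \<open>w\<close>), so (SSP) of
  the factor applies; either way the error is \<open>o(|a|)\<close>.  Conversely, a sequence \<open>a \<rightarrow> 0\<close> with direction \<open>u \<in> D(A)\<close> is lifted to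
  \<open>(a, 0)\<close>, whose direction \<open>(u, 0)\<close> lies in \<open>D(A \<times> B)\<close> (pair the points of \<open>A\<close> realising
  \<open>u\<close> with quadratically small points of \<open>B\<close>); the first component of an (SSP) approximation
  of \<open>(a, 0)\<close> in \<open>A \<times> B\<close> approximates \<open>a\<close>.\<close>

lemma closure_zero_small_point:
  assumes "0 \<in> closure A" and "e > 0"
  shows "\<exists>x\<in>A. norm x < e"
  using assms by (auto simp: closure_approachable dist_norm)

lemma relative_error_symmetric:
  fixes a b :: "nat \<Rightarrow> 'a::real_normed_vector"
  assumes "\<forall>i. a i \<noteq> 0" and "(\<lambda>i. norm (a i - b i) / norm (a i)) \<longlonglongrightarrow> 0"
  shows "(\<lambda>i. norm (a i - b i) / norm (b i)) \<longlonglongrightarrow> 0"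
proof (rule Lim_null_comparison)
  show "(\<lambda>i. 2 * (norm (a i - b i) / norm (a i))) \<longlonglongrightarrow> 0"
    using tendsto_mult[OF tendsto_const assms(2), of 2] by simp
  have "eventually (\<lambda>i. norm (a i - b i) / norm (a i) < 1/2) sequentially"
    using order_tendstoD(2)[OF assms(2), of "1/2"] by simp
  then show "eventually (\<lambda>i. norm (norm (a i - b i) / norm (b i))
                               \<le> 2 * (norm (a i - b i) / norm (a i))) sequentially"
  proof eventually_elim
    case (elim i)
    have pos: "norm (a i) > 0" using assms(1) by simp
    hence small: "norm (a i - b i) < norm (a i) / 2" using elim by (simp add: field_simps)
    have "norm (a i) \<le> norm (a i - b i) + norm (b i)" by (metis norm_triangle_sub add.commute)
    hence "norm (b i) \<ge> norm (a i) / 2" using small by linarith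
    hence "norm (a i - b i) / norm (b i) \<le> norm (a i - b i) / (norm (a i) / 2)"
      using pos by (intro divide_left_mono) (auto intro!: mult_pos_pos)
    thus ?case by (simp add: field_simps)
  qed
qed

lemma rescaled_limit_direction:
  fixes f :: "nat \<Rightarrow> 'a::real_normed_vector" and g :: "nat \<Rightarrow> 'c::real_normed_vector"
  assumes "(\<lambda>i. (1 / norm (g i)) *\<^sub>R f i) \<longlonglongrightarrow> v" and "v \<noteq> 0"
  shows "eventually (\<lambda>i. f i \<noteq> 0) sequentially"
    and "(\<lambda>i. (1 / norm (f i)) *\<^sub>R f i) \<longlonglongrightarrow> (1 / norm v) *\<^sub>R v"
proof -
  have ev: "eventually (\<lambda>i. (1 / norm (g i)) *\<^sub>R f i \<noteq> 0) sequentially"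
    using assms by (rule tendsto_imp_eventually_ne)
  then show "eventually (\<lambda>i. f i \<noteq> 0) sequentially" by eventually_elim auto
  have "(\<lambda>i. inverse (norm ((1 / norm (g i)) *\<^sub>R f i)) *\<^sub>R ((1 / norm (g i)) *\<^sub>R f i))
          \<longlonglongrightarrow> inverse (norm v) *\<^sub>R v"
    using assms by (intro tendsto_scaleR tendsto_inverse tendsto_norm) auto
  moreover have "eventually (\<lambda>i. inverse (norm ((1 / norm (g i)) *\<^sub>R f i)) *\<^sub>R ((1 / norm (g i)) *\<^sub>R f i)
                   = (1 / norm (f i)) *\<^sub>R f i) sequentially"
    using ev by eventually_elim (auto simp: divide_simps)
  ultimately show "(\<lambda>i. (1 / norm (f i)) *\<^sub>R f i) \<longlonglongrightarrow> (1 / norm v) *\<^sub>R v"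
    by (simp add: Lim_transform_eventually inverse_eq_divide)
qed

lemma dirset_intro_rescaled:
  fixes y :: "nat \<Rightarrow> 'a::euclidean_space" and g :: "nat \<Rightarrow> 'c::real_normed_vector"
  assumes "\<forall>i. y i \<in> A" and "y \<longlonglongrightarrow> 0"
    and "(\<lambda>i. (1 / norm (g i)) *\<^sub>R y i) \<longlonglongrightarrow> v" and "v \<noteq> 0"
  shows "(1 / norm v) *\<^sub>R v \<in> dirset A"
proof -
  obtain N where N: "\<forall>i\<ge>N. y i \<noteq> 0"
    using rescaled_limit_direction(1)[OF assms(3,4)] by (auto simp: eventually_sequentially)
  have "\<forall>i. y (i + N) \<in> A - {0}" using assms(1) N by simp
  moreover have "(\<lambda>i. y (i + N)) \<longlonglongrightarrow> 0"
    using LIMSEQ_ignore_initial_segment[OF assms(2)] .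
  moreover have "(\<lambda>i. (1 / norm (y (i + N))) *\<^sub>R y (i + N)) \<longlonglongrightarrow> (1 / norm v) *\<^sub>R v"
    using LIMSEQ_ignore_initial_segment[OF rescaled_limit_direction(2)[OF assms(3,4)]] .
  ultimately show ?thesis using assms(4) unfolding dirset_def by fastforce
qed

lemma dirset_linear_image:
  fixes P :: "'c::euclidean_space \<Rightarrow> 'a::euclidean_space"
  assumes "w \<in> dirset C" and "bounded_linear P" and "P ` C \<subseteq> A" and "P w \<noteq> 0"
  shows "(1 / norm (P w)) *\<^sub>R P w \<in> dirset A"
proof -
  interpret P: bounded_linear P by fact
  obtain x where x: "\<forall>i. x i \<in> C - {0}" "x \<longlonglongrightarrow> 0" "(\<lambda>i. (1 / norm (x i)) *\<^sub>R x i) \<longlonglongrightarrow> w"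
    using assms(1) unfolding dirset_def by blast
  have "(\<lambda>i. P (x i)) \<longlonglongrightarrow> 0"
    using P.tendsto[OF x(2)] by (simp add: P.zero)
  moreover have "(\<lambda>i. (1 / norm (x i)) *\<^sub>R P (x i)) \<longlonglongrightarrow> P w"
    using P.tendsto[OF x(3)] by (simp add: P.scaleR)
  ultimately show ?thesis
    using assms(3,4) x(1) by (intro dirset_intro_rescaled) auto
qed

lemma relative_error_direction:
  fixes z w :: "nat \<Rightarrow> 'a::real_normed_vector"
  assumes "\<forall>i. w i \<noteq> 0" and "(\<lambda>i. norm (z i - w i) / norm (w i)) \<longlonglongrightarrow> 0"
    and "(\<lambda>i. (1 / norm (w i)) *\<^sub>R w i) \<longlonglongrightarrow> u" and "norm u = 1"
  shows "(\<lambda>i. (1 / norm (z i)) *\<^sub>R z i) \<longlonglongrightarrow> u"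
proof -
  have "(\<lambda>i. (1 / norm (w i)) *\<^sub>R (z i - w i)) \<longlonglongrightarrow> 0"
  proof (rule tendsto_norm_zero_cancel)
    have scaled: "norm ((1 / norm (w i)) *\<^sub>R (z i - w i)) = norm (z i - w i) / norm (w i)" for i
      by simp
    show "(\<lambda>i. norm ((1 / norm (w i)) *\<^sub>R (z i - w i))) \<longlonglongrightarrow> 0"
      unfolding scaled by (rule assms(2))
  qed
  from tendsto_add[OF assms(3) this]
  have "(\<lambda>i. (1 / norm (w i)) *\<^sub>R z i) \<longlonglongrightarrow> u"
    by (simp add: scaleR_right_diff_distrib)
  from rescaled_limit_direction(2)[OF this] show ?thesis
    using assms(4) by force
qed

lemma dirset_isometric_image:
  fixes L :: "'a::euclidean_space \<Rightarrow> 'c::euclidean_space"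
  assumes "u \<in> dirset A" and "bounded_linear L" and norm_L: "\<And>x. norm (L x) = norm x"
    and close: "\<And>x. x \<in> A - {0} \<Longrightarrow> \<exists>z\<in>C - {0}. norm (z - L x) \<le> norm x ^ 2"
  shows "L u \<in> dirset C"
proof -
  interpret L: bounded_linear L by fact
  obtain x where x: "\<forall>i. x i \<in> A - {0}" "x \<longlonglongrightarrow> 0" "(\<lambda>i. (1 / norm (x i)) *\<^sub>R x i) \<longlonglongrightarrow> u"
    and u: "norm u = 1"
    using assms(1) unfolding dirset_def by auto
  have "\<forall>i. \<exists>z\<in>C - {0}. norm (z - L (x i)) \<le> norm (x i) ^ 2"
    using close x(1) by blast
  then obtain z where z: "\<forall>i. z i \<in> C - {0} \<and> norm (z i - L (x i)) \<le> norm (x i) ^ 2"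
    by metis
  have norm_x: "(\<lambda>i. norm (x i)) \<longlonglongrightarrow> 0"
    using tendsto_norm_zero[OF x(2)] .
  have "z \<longlonglongrightarrow> 0"
  proof (rule Lim_null_comparison[OF always_eventually])
    show "\<forall>i. norm (z i) \<le> norm (x i) + norm (x i) ^ 2"
    proof
      fix i
      show "norm (z i) \<le> norm (x i) + norm (x i) ^ 2"
        using z[rule_format, of i] norm_triangle_sub[of "z i" "L (x i)"] norm_L[of "x i"] by linarith
    qed
    show "(\<lambda>i. norm (x i) + norm (x i) ^ 2) \<longlonglongrightarrow> 0"
      using tendsto_add[OF norm_x tendsto_power[OF norm_x, of 2]] by simp
  qed
  moreover have "(\<lambda>i. (1 / norm (z i)) *\<^sub>R z i) \<longlonglongrightarrow> L u"
  proof (rule relative_error_direction)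
    show "\<forall>i. L (x i) \<noteq> 0" using x(1) norm_L by (metis Diff_iff norm_eq_zero singletonI)
    show "(\<lambda>i. norm (z i - L (x i)) / norm (L (x i))) \<longlonglongrightarrow> 0"
    proof (rule Lim_null_comparison[OF always_eventually norm_x], rule allI)
      fix i
      have "norm (x i) > 0" using x(1) by auto
      then show "norm (norm (z i - L (x i)) / norm (L (x i))) \<le> norm (x i)"
        using z norm_L by (simp add: divide_simps power2_eq_square)
    qed
    show "(\<lambda>i. (1 / norm (L (x i))) *\<^sub>R L (x i)) \<longlonglongrightarrow> L u"
      using L.tendsto[OF x(3)] by (simp add: norm_L L.scaleR)
  qed (simp add: norm_L u)
  ultimately show ?thesis
    using z u norm_L unfolding dirset_def by auto
qed

lemma SSP_eventually_nonzero:
  fixes A :: "'a::euclidean_space set"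
  assumes "SSP A" and "a \<longlonglongrightarrow> 0" and nonzero: "eventually (\<lambda>i. a i \<noteq> 0) sequentially"
    and "(\<lambda>i. (1 / norm (a i)) *\<^sub>R a i) \<longlonglongrightarrow> u" and "u \<in> dirset A"
  obtains b where "\<forall>i. b i \<in> A" and "(\<lambda>i. norm (a i - b i) / norm (a i)) \<longlonglongrightarrow> 0"
proof -
  have "u \<noteq> 0" using assms(5) by (auto simp: dirset_def)
  define a' where "a' i = (if a i = 0 then u else a i)" for i
  have same: "eventually (\<lambda>i. a i = a' i) sequentially"
    using nonzero by eventually_elim (simp add: a'_def)
  have "\<forall>i. a' i \<noteq> 0" using \<open>u \<noteq> 0\<close> by (simp add: a'_def)
  moreover have "a' \<longlonglongrightarrow> 0"
    using Lim_transform_eventually[OF assms(2) same] .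
  moreover have "eventually (\<lambda>i. (1 / norm (a i)) *\<^sub>R a i = (1 / norm (a' i)) *\<^sub>R a' i) sequentially"
    using same by eventually_elim simp
  then have "(\<lambda>i. (1 / norm (a' i)) *\<^sub>R a' i) \<longlonglongrightarrow> u"
    by (rule Lim_transform_eventually[OF assms(4)])
  ultimately obtain b where b: "\<forall>i. b i \<in> A" "(\<lambda>i. norm (a' i - b i) / norm (a' i)) \<longlonglongrightarrow> 0"
    using assms(1,5) unfolding SSP_def by blast
  have "eventually (\<lambda>i. norm (a' i - b i) / norm (a' i) = norm (a i - b i) / norm (a i)) sequentially"
    using same by eventually_elim simp
  then have "(\<lambda>i. norm (a i - b i) / norm (a i)) \<longlonglongrightarrow> 0"
    by (rule Lim_transform_eventually[OF b(2)])
  with b(1) show ?thesis using that by blast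
qed

lemma SSP_approx_linear_image:
  fixes P :: "'c::euclidean_space \<Rightarrow> 'a::euclidean_space"
  assumes "SSP A" and "0 \<in> closure A"
    and P: "bounded_linear P" "\<And>x. norm (P x) \<le> norm x" "P ` C \<subseteq> A"
    and a: "\<forall>i. a i \<noteq> 0" "a \<longlonglongrightarrow> 0" "(\<lambda>i. (1 / norm (a i)) *\<^sub>R a i) \<longlonglongrightarrow> w"
    and "w \<in> dirset C"
  obtains b where "\<forall>i. b i \<in> A" and "(\<lambda>i. norm (P (a i) - b i) / norm (a i)) \<longlonglongrightarrow> 0"
proof -
  interpret P: bounded_linear P by fact
  have Pa: "(\<lambda>i. (1 / norm (a i)) *\<^sub>R P (a i)) \<longlonglongrightarrow> P w"
    using P.tendsto[OF a(3)] by (simp add: P.scaleR)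
  have pos: "norm (a i) > 0" for i using a(1) by simp
  show ?thesis
  proof (cases "P w = 0")
    case True
    have "\<forall>i. \<exists>y\<in>A. norm y < norm (a i) ^ 2"
      using closure_zero_small_point[OF assms(2)] pos by simp
    then obtain b where b: "\<forall>i. b i \<in> A \<and> norm (b i) < norm (a i) ^ 2"
      by metis
    have "(\<lambda>i. norm (P (a i) - b i) / norm (a i)) \<longlonglongrightarrow> 0"
    proof (rule Lim_null_comparison[OF always_eventually], rule allI)
      fix i
      have "norm (P (a i) - b i) \<le> norm (P (a i)) + norm (a i) * norm (a i)"
        using norm_triangle_ineq4[of "P (a i)" "b i"] b[rule_format, of i]
        by (simp add: power2_eq_square)
      then show "norm (norm (P (a i) - b i) / norm (a i))
                   \<le> norm ((1 / norm (a i)) *\<^sub>R P (a i)) + norm (a i)"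
        using pos[of i] by (simp add: divide_simps)
    next
      show "(\<lambda>i. norm ((1 / norm (a i)) *\<^sub>R P (a i)) + norm (a i)) \<longlonglongrightarrow> 0"
        using tendsto_add[OF tendsto_norm_zero[OF Pa[unfolded True]] tendsto_norm_zero[OF a(2)]]
        by simp
    qed
    with b show ?thesis using that by blast
  next
    case False
    have "(\<lambda>i. P (a i)) \<longlonglongrightarrow> 0"
      using P.tendsto[OF a(2)] by (simp add: P.zero)
    then obtain b where b: "\<forall>i. b i \<in> A" "(\<lambda>i. norm (P (a i) - b i) / norm (P (a i))) \<longlonglongrightarrow> 0"
      using SSP_eventually_nonzero[OF assms(1) _ rescaled_limit_direction[OF Pa False]]
        dirset_linear_image[OF assms(9) P(1,3) False] by blast
    have "(\<lambda>i. norm (P (a i) - b i) / norm (a i)) \<longlonglongrightarrow> 0"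
    proof (rule Lim_null_comparison[OF _ b(2)])
      show "eventually (\<lambda>i. norm (norm (P (a i) - b i) / norm (a i))
              \<le> norm (P (a i) - b i) / norm (P (a i))) sequentially"
        using rescaled_limit_direction(1)[OF Pa False]
      proof eventually_elim
        case (elim i)
        then show ?case using P(2)[of "a i"] by (auto intro!: divide_left_mono mult_pos_pos)
      qed
    qed
    with b(1) show ?thesis using that by blast
  qed
qed

lemma SSP_Times:
  fixes A :: "'a::euclidean_space set" and B :: "'b::euclidean_space set"
  assumes "SSP A" and "SSP B" and "0 \<in> closure A" and "0 \<in> closure B"
  shows "SSP (A \<times> B)"
  unfolding SSP_def
proof (intro allI impI, elim conjE bexE)
  fix a :: "nat \<Rightarrow> 'a \<times> 'b" and w
  assume a: "\<forall>i. a i \<noteq> 0" "a \<longlonglongrightarrow> 0" "(\<lambda>i. (1 / norm (a i)) *\<^sub>R a i) \<longlonglongrightarrow> w"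
    and w: "w \<in> dirset (A \<times> B)"
  have norm_fst: "norm (fst z) \<le> norm z" and norm_snd: "norm (snd z) \<le> norm z" for z :: "'a \<times> 'b"
    using norm_fst_le[of "fst z" "snd z"] norm_snd_le[where x = "fst z" and y = "snd z"] by simp_all
  have fst_Times: "fst ` (A \<times> B) \<subseteq> A" and snd_Times: "snd ` (A \<times> B) \<subseteq> B"
    by auto
  obtain b1 where b1: "\<forall>i. b1 i \<in> A" "(\<lambda>i. norm (fst (a i) - b1 i) / norm (a i)) \<longlonglongrightarrow> 0"
    by (rule SSP_approx_linear_image[OF assms(1,3) bounded_linear_fst norm_fst fst_Times a w])
  obtain b2 where b2: "\<forall>i. b2 i \<in> B" "(\<lambda>i. norm (snd (a i) - b2 i) / norm (a i)) \<longlonglongrightarrow> 0"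
    by (rule SSP_approx_linear_image[OF assms(2,4) bounded_linear_snd norm_snd snd_Times a w])
  define b where "b i = (b1 i, b2 i)" for i
  have errors: "(\<lambda>i. norm (fst (a i) - b1 i) / norm (a i) + norm (snd (a i) - b2 i) / norm (a i))
                  \<longlonglongrightarrow> 0"
    using tendsto_add[OF b1(2) b2(2)] by simp
  have error: "(\<lambda>i. norm (a i - b i) / norm (a i)) \<longlonglongrightarrow> 0"
  proof (rule Lim_null_comparison[OF always_eventually errors], rule allI)
    fix i
    have "a i - b i = (fst (a i) - b1 i, snd (a i) - b2 i)"
      by (simp add: b_def prod_eq_iff)
    then have "norm (a i - b i) \<le> norm (fst (a i) - b1 i) + norm (snd (a i) - b2 i)"
      by (simp add: norm_Pair_le)
    then show "norm (norm (a i - b i) / norm (a i))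
                 \<le> norm (fst (a i) - b1 i) / norm (a i) + norm (snd (a i) - b2 i) / norm (a i)"
      by (simp add: add_divide_distrib[symmetric] divide_right_mono)
  qed
  show "\<exists>b. (\<forall>i. b i \<in> A \<times> B) \<and> (\<lambda>i. norm (a i - b i) / norm (a i)) \<longlonglongrightarrow> 0 \<and>
        (\<lambda>i. norm (a i - b i) / norm (b i)) \<longlonglongrightarrow> 0"
    using b1(1) b2(1) error relative_error_symmetric[OF a(1) error]
    by (intro exI[of _ b]) (simp add: b_def)
qed

lemma SSP_retract:
  fixes L :: "'a::euclidean_space \<Rightarrow> 'c::euclidean_space"
  assumes "SSP C" and "bounded_linear L" and norm_L: "\<And>x. norm (L x) = norm x"
    and "linear P" and norm_P: "\<And>x. norm (P x) \<le> norm x" and P_L: "\<And>x. P (L x) = x"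
    and "P ` C \<subseteq> A" and dirset_L: "\<And>u. u \<in> dirset A \<Longrightarrow> L u \<in> dirset C"
  shows "SSP A"
  unfolding SSP_def
proof (intro allI impI, elim conjE bexE)
  interpret L: bounded_linear L by fact
  fix a :: "nat \<Rightarrow> 'a" and u
  assume a: "\<forall>i. a i \<noteq> 0" "a \<longlonglongrightarrow> 0" "(\<lambda>i. (1 / norm (a i)) *\<^sub>R a i) \<longlonglongrightarrow> u" "u \<in> dirset A"
  have "\<forall>i. L (a i) \<noteq> 0" using a(1) norm_L by (metis norm_eq_zero)
  moreover have "(\<lambda>i. L (a i)) \<longlonglongrightarrow> 0" using L.tendsto[OF a(2)] by (simp add: L.zero)
  moreover have "(\<lambda>i. (1 / norm (L (a i))) *\<^sub>R L (a i)) \<longlonglongrightarrow> L u"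
    using L.tendsto[OF a(3)] by (simp add: norm_L L.scaleR)
  ultimately obtain b where b: "\<forall>i. b i \<in> C" "(\<lambda>i. norm (L (a i) - b i) / norm (L (a i))) \<longlonglongrightarrow> 0"
    using assms(1)[unfolded SSP_def, rule_format, of "\<lambda>i. L (a i)"] dirset_L[OF a(4)] by blast
  have error: "(\<lambda>i. norm (a i - P (b i)) / norm (a i)) \<longlonglongrightarrow> 0"
  proof (rule Lim_null_comparison[OF always_eventually b(2)], rule allI)
    fix i
    have "a i - P (b i) = P (L (a i) - b i)"
      by (simp add: linear_diff[OF \<open>linear P\<close>] P_L)
    then have "norm (a i - P (b i)) \<le> norm (L (a i) - b i)"
      by (simp add: norm_P)
    then show "norm (norm (a i - P (b i)) / norm (a i)) \<le> norm (L (a i) - b i) / norm (L (a i))"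
      by (simp add: norm_L divide_right_mono)
  qed
  show "\<exists>b. (\<forall>i. b i \<in> A) \<and> (\<lambda>i. norm (a i - b i) / norm (a i)) \<longlonglongrightarrow> 0 \<and>
        (\<lambda>i. norm (a i - b i) / norm (b i)) \<longlonglongrightarrow> 0"
    using b(1) \<open>P ` C \<subseteq> A\<close> error relative_error_symmetric[OF a(1) error]
    by (intro exI[of _ "\<lambda>i. P (b i)"]) auto
qed

lemma SSP_TimesD1:
  fixes A :: "'a::euclidean_space set" and B :: "'b::euclidean_space set"
  assumes "SSP (A \<times> B)" and "0 \<in> closure B"
  shows "SSP A"
proof (rule SSP_retract[OF assms(1), where L = "\<lambda>x. (x, 0)" and P = fst])
  show "bounded_linear (\<lambda>x::'a. (x, 0::'b))"
    by (intro bounded_linear_Pair bounded_linear_ident bounded_linear_zero)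
  show "(u, 0) \<in> dirset (A \<times> B)" if "u \<in> dirset A" for u
  proof (rule dirset_isometric_image[OF that, where L = "\<lambda>x. (x, 0)"])
    show "bounded_linear (\<lambda>x::'a. (x, 0::'b))"
      by (intro bounded_linear_Pair bounded_linear_ident bounded_linear_zero)
    show "\<exists>z\<in>A \<times> B - {0}. norm (z - (x, 0)) \<le> norm x ^ 2" if x: "x \<in> A - {0}" for x
    proof -
      obtain y where "y \<in> B" "norm y < norm x ^ 2"
        using closure_zero_small_point[OF assms(2), of "norm x ^ 2"] x by auto
      with x show ?thesis by (intro bexI[of _ "(x, y)"]) (auto simp: zero_prod_def)
    qed
  qed (simp add: norm_Pair)
qed (auto simp: norm_Pair linear_fst intro: norm_fst_le)

lemma SSP_TimesD2:
  fixes A :: "'a::euclidean_space set" and B :: "'b::euclidean_space set"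
  assumes "SSP (A \<times> B)" and "0 \<in> closure A"
  shows "SSP B"
proof (rule SSP_retract[OF assms(1), where L = "\<lambda>x. (0, x)" and P = snd])
  show "bounded_linear (\<lambda>x::'b. (0::'a, x))"
    by (intro bounded_linear_Pair bounded_linear_ident bounded_linear_zero)
  show "(0, u) \<in> dirset (A \<times> B)" if "u \<in> dirset B" for u
  proof (rule dirset_isometric_image[OF that, where L = "\<lambda>x. (0, x)"])
    show "bounded_linear (\<lambda>x::'b. (0::'a, x))"
      by (intro bounded_linear_Pair bounded_linear_ident bounded_linear_zero)
    show "\<exists>z\<in>A \<times> B - {0}. norm (z - (0, x)) \<le> norm x ^ 2" if x: "x \<in> B - {0}" for x
    proof -
      obtain y where "y \<in> A" "norm y < norm x ^ 2"
        using closure_zero_small_point[OF assms(2), of "norm x ^ 2"] x by auto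
      with x show ?thesis by (intro bexI[of _ "(y, x)"]) (auto simp: zero_prod_def)
    qed
  qed (simp add: norm_Pair)
qed (auto simp: norm_Pair linear_snd intro: norm_snd_le)

theorem proposition2p33:
  fixes A :: "'a::euclidean_space set" and B :: "'b::euclidean_space set"
  assumes "0 \<in> closure A" and "0 \<in> closure B"
  shows "(SSP A \<and> SSP B) \<longleftrightarrow> SSP (A \<times> B)"
  using SSP_Times[OF _ _ assms] SSP_TimesD1[OF _ assms(2)] SSP_TimesD2[OF _ assms(1)] by blast

end
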